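(* Let $(\mathbb S,+,\cdot)$ be an S-Field. Then for every $\alpha\in\mathbb S_0$ with $\alpha\neq0$, $\frac{\alpha}{0}=q_0^*(\alpha)$ exists and is a unique element, and distinct such $\alpha$ give distinct values: if $\alpha,\beta\in\mathbb S_0\setminus\{0\}$ and $\alpha\neq\beta$ then $\frac{\alpha}{0}\neq\frac{\beta}{0}$.
   Context: An S-Structure is a triple $(\mathbb S,+,\cdot)$ where $\mathbb S$ is a set and $+,\cdot$ are binary operations on $\mathbb S$ such that: $(\mathbb S,+)$ is a commutative group with identity $0$ (the inverse of $s$ is written $-s$, and $s-t:=s+(-t)$); $\mathbb S$ is closed under $\cdot$; and there exists $s\in\mathbb S$ with $0\cdot s\neq 0$ or $s\cdot 0\neq 0$. Multiplication binds tighter than addition. The structures considered come with a distinguished element of $\mathbb S$ denoted $1$. It is Commutative if $s\cdot t=t\cdot s$ for all $s,t$. For a Commutative S-Structure and $\alpha\in\mathbb S$, put $\mathbb S_\alpha=\{s\in\mathbb S:0\cdot s=s\cdot 0=\alpha\}$ and $\Lambda=\{\alpha\in\mathbb S:\mathbb S_\alpha\neq\emptyset\}$. Wheel Distributive: $s\cdot(t+r)+(s\cdot 0)=(s\cdot t)+(s\cdot r)$ for all $s,t,r\in\mathbb S$. S-Associative: for all $m,n\in\mathbb S_0$ and $s\in\mathbb S$, $m\cdot(n\cdot s)=(m\cdot n)\cdot s-([(m-1)\cdot(n-1)]\cdot(0\cdot s))$. Base: if $\mathbb S_0\neq\emptyset$ and $\alpha\in\Lambda$, $q\in\mathbb S_\alpha$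 is a Base for $\mathbb S_\alpha$ if $q+\beta\in\mathbb S_\alpha$ for all $\beta\in\mathbb S_0$ and every $s\in\mathbb S_\alpha$ equals $q+\beta$ for some $\beta\in\mathbb S_0$. Coordinated: $\mathbb S_0\neq\emptyset$ and every $\mathbb S_\alpha$ with $\alpha\in\Lambda$ has a Base. Standard Bases: a Coordinated Commutative S-Structure has Standard Bases if there is a specified element $q_0(1)\in\mathbb S_1$ which is a Base for $\mathbb S_1$, and for every $\alpha\in\Lambda$ the element $q_0(\alpha):=\alpha\cdot(q_0(1)+1)-1$ lies in $\mathbb S_\alpha$ and is a Base for $\mathbb S_\alpha$. An Essential S-Structure is an S-Structure that is Commutative, Wheel Distributive, S-Associative, has Standard Bases (in particular is Coordinated), satisfies $0,1\in\mathbb S_0$, and satisfies $\mathbb S_0=\{1\cdot x:x\in\mathbb S_0\}$. A Unity is an element $e\in\Lambda$ with $e\cdot s=s\cdot e=s$ for all $s\in\mathbb S$. Scalar Inverses: the structure has a Unity $e$ and for every $x\in\mathbb S_0$ with $x\neq 0$ there is $x^{-1}\in\mathbb S_0$ with $x\cdot x^{-1}=x^{-1}\cdot x=e$. An S-Ring is an Essential S-Structure with a Unity; an S-Field is an S-Ring with Scalar Inverses. Reversible: for $\alpha\in\Lambda$, $q_0(\alpha)$ is Reversible if there exists $\alpha^*\in\Lambda$ with $q_0(1)=\alpha^*\cdot(q_0(\alpha)+\alpha)-\alpha$; then $q_0^*(\alpha):=q_0(\alpha)$. Division By Zero: in an S-Field, for $\alpha\in\mathbb S_0$ with $\alpha\neq0$,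 $\frac{\alpha}{0}:=q_0^*(\alpha)$. *)

theory Defs
  imports Main
begin

text \<open>For Standard Bases the specified element q0(1) is q01.\<close>

definition ssub :: "('a \<Rightarrow> 'a \<Rightarrow> 'a) \<Rightarrow> ('a \<Rightarrow> 'a) \<Rightarrow> 'a \<Rightarrow> 'a \<Rightarrow> 'a" where
  "ssub add neg s t = add s (neg t)"

definition S_structure ::
  "'a set \<Rightarrow> ('a \<Rightarrow> 'a \<Rightarrow> 'a) \<Rightarrow> ('a \<Rightarrow> 'a) \<Rightarrow> 'a \<Rightarrow> ('a \<Rightarrow> 'a \<Rightarrow> 'a) \<Rightarrow> 'a \<Rightarrow> bool" where
  "S_structure S add neg z mul one \<longleftrightarrow>
     (\<forall>s\<in>S. \<forall>t\<in>S. add s t \<in> S) \<and>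
     (\<forall>s\<in>S. \<forall>t\<in>S. \<forall>r\<in>S. add (add s t) r = add s (add t r)) \<and>
     (\<forall>s\<in>S. \<forall>t\<in>S. add s t = add t s) \<and>
     z \<in> S \<and> (\<forall>s\<in>S. add z s = s) \<and>
     (\<forall>s\<in>S. neg s \<in> S \<and> add s (neg s) = z) \<and>
     (\<forall>s\<in>S. \<forall>t\<in>S. mul s t \<in> S) \<and>
     (\<exists>s\<in>S. mul z s \<noteq> z \<or> mul s z \<noteq> z) \<and>
     one \<in> S"

definition S_commutative :: "'a set \<Rightarrow> ('a \<Rightarrow> 'a \<Rightarrow> 'a) \<Rightarrow> bool" where
  "S_commutative S mul \<longleftrightarrow> (\<forall>s\<in>S. \<forall>t\<in>S. mul s t = mul t s)"

definition S_alpha :: "'a set \<Rightarrow> 'a \<Rightarrow> ('a \<Rightarrow> 'a \<Rightarrow> 'a) \<Rightarrow> 'a \<Rightarrow> 'a set" where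
  "S_alpha S z mul \<alpha> = {s\<in>S. mul z s = \<alpha> \<and> mul s z = \<alpha>}"

definition Lambda :: "'a set \<Rightarrow> 'a \<Rightarrow> ('a \<Rightarrow> 'a \<Rightarrow> 'a) \<Rightarrow> 'a set" where
  "Lambda S z mul = {\<alpha>\<in>S. S_alpha S z mul \<alpha> \<noteq> {}}"

definition wheel_distributive ::
  "'a set \<Rightarrow> ('a \<Rightarrow> 'a \<Rightarrow> 'a) \<Rightarrow> 'a \<Rightarrow> ('a \<Rightarrow> 'a \<Rightarrow> 'a) \<Rightarrow> bool" where
  "wheel_distributive S add z mul \<longleftrightarrow>
     (\<forall>s\<in>S. \<forall>t\<in>S. \<forall>r\<in>S. add (mul s (add t r)) (mul s z) = add (mul s t) (mul s r))"

definition S_associative ::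
  "'a set \<Rightarrow> ('a \<Rightarrow> 'a \<Rightarrow> 'a) \<Rightarrow> ('a \<Rightarrow> 'a) \<Rightarrow> 'a \<Rightarrow> ('a \<Rightarrow> 'a \<Rightarrow> 'a) \<Rightarrow> 'a \<Rightarrow> bool" where
  "S_associative S add neg z mul one \<longleftrightarrow>
     (\<forall>m\<in>S_alpha S z mul z. \<forall>n\<in>S_alpha S z mul z. \<forall>s\<in>S.
        mul m (mul n s) =
        ssub add neg (mul (mul m n) s)
          (mul (mul (ssub add neg m one) (ssub add neg n one)) (mul z s)))"

definition is_base ::
  "'a set \<Rightarrow> ('a \<Rightarrow> 'a \<Rightarrow> 'a) \<Rightarrow> 'a \<Rightarrow> ('a \<Rightarrow> 'a \<Rightarrow> 'a) \<Rightarrow> 'a \<Rightarrow> 'a \<Rightarrow> bool" where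
  "is_base S add z mul \<alpha> q \<longleftrightarrow>
     q \<in> S_alpha S z mul \<alpha> \<and>
     (\<forall>\<beta>\<in>S_alpha S z mul z. add q \<beta> \<in> S_alpha S z mul \<alpha>) \<and>
     (\<forall>s\<in>S_alpha S z mul \<alpha>. \<exists>\<beta>\<in>S_alpha S z mul z. s = add q \<beta>)"

definition coordinated ::
  "'a set \<Rightarrow> ('a \<Rightarrow> 'a \<Rightarrow> 'a) \<Rightarrow> 'a \<Rightarrow> ('a \<Rightarrow> 'a \<Rightarrow> 'a) \<Rightarrow> bool" where
  "coordinated S add z mul \<longleftrightarrow>
     S_alpha S z mul z \<noteq> {} \<and>
     (\<forall>\<alpha>\<in>Lambda S z mul. \<exists>q. is_base S add z mul \<alpha> q)"

definition q0 ::
  "('a \<Rightarrow> 'a \<Rightarrow> 'a) \<Rightarrow> ('a \<Rightarrow> 'a) \<Rightarrow> ('a \<Rightarrow> 'a \<Rightarrow> 'a) \<Rightarrow> 'a \<Rightarrow> 'a \<Rightarrow> 'a \<Rightarrow> 'a" where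
  "q0 add neg mul one q01 \<alpha> = ssub add neg (mul \<alpha> (add q01 one)) one"

definition standard_bases ::
  "'a set \<Rightarrow> ('a \<Rightarrow> 'a \<Rightarrow> 'a) \<Rightarrow> ('a \<Rightarrow> 'a) \<Rightarrow> 'a \<Rightarrow> ('a \<Rightarrow> 'a \<Rightarrow> 'a) \<Rightarrow> 'a \<Rightarrow> 'a \<Rightarrow> bool" where
  "standard_bases S add neg z mul one q01 \<longleftrightarrow>
     coordinated S add z mul \<and>
     q01 \<in> S_alpha S z mul one \<and>
     is_base S add z mul one q01 \<and>
     (\<forall>\<alpha>\<in>Lambda S z mul.
        q0 add neg mul one q01 \<alpha> \<in> S_alpha S z mul \<alpha> \<and>
        is_base S add z mul \<alpha> (q0 add neg mul one q01 \<alpha>))"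

definition essential ::
  "'a set \<Rightarrow> ('a \<Rightarrow> 'a \<Rightarrow> 'a) \<Rightarrow> ('a \<Rightarrow> 'a) \<Rightarrow> 'a \<Rightarrow> ('a \<Rightarrow> 'a \<Rightarrow> 'a) \<Rightarrow> 'a \<Rightarrow> 'a \<Rightarrow> bool" where
  "essential S add neg z mul one q01 \<longleftrightarrow>
     S_structure S add neg z mul one \<and>
     S_commutative S mul \<and>
     wheel_distributive S add z mul \<and>
     S_associative S add neg z mul one \<and>
     standard_bases S add neg z mul one q01 \<and>
     z \<in> S_alpha S z mul z \<and> one \<in> S_alpha S z mul z \<and>
     S_alpha S z mul z = {mul one x | x. x \<in> S_alpha S z mul z}"

definition is_unity :: "'a set \<Rightarrow> 'a \<Rightarrow> ('a \<Rightarrow> 'a \<Rightarrow> 'a) \<Rightarrow> 'a \<Rightarrow> bool" where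
  "is_unity S z mul e \<longleftrightarrow>
     e \<in> Lambda S z mul \<and> (\<forall>s\<in>S. mul e s = s \<and> mul s e = s)"

definition S_ring ::
  "'a set \<Rightarrow> ('a \<Rightarrow> 'a \<Rightarrow> 'a) \<Rightarrow> ('a \<Rightarrow> 'a) \<Rightarrow> 'a \<Rightarrow> ('a \<Rightarrow> 'a \<Rightarrow> 'a) \<Rightarrow> 'a \<Rightarrow> 'a \<Rightarrow> bool" where
  "S_ring S add neg z mul one q01 \<longleftrightarrow>
     essential S add neg z mul one q01 \<and> (\<exists>e. is_unity S z mul e)"

definition S_field ::
  "'a set \<Rightarrow> ('a \<Rightarrow> 'a \<Rightarrow> 'a) \<Rightarrow> ('a \<Rightarrow> 'a) \<Rightarrow> 'a \<Rightarrow> ('a \<Rightarrow> 'a \<Rightarrow> 'a) \<Rightarrow> 'a \<Rightarrow> 'a \<Rightarrow> bool" where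
  "S_field S add neg z mul one q01 \<longleftrightarrow>
     S_ring S add neg z mul one q01 \<and>
     (\<exists>e. is_unity S z mul e \<and>
        (\<forall>x\<in>S_alpha S z mul z. x \<noteq> z \<longrightarrow>
           (\<exists>y\<in>S_alpha S z mul z. mul x y = e \<and> mul y x = e)))"

definition reversible ::
  "'a set \<Rightarrow> ('a \<Rightarrow> 'a \<Rightarrow> 'a) \<Rightarrow> ('a \<Rightarrow> 'a) \<Rightarrow> 'a \<Rightarrow> ('a \<Rightarrow> 'a \<Rightarrow> 'a) \<Rightarrow> 'a \<Rightarrow> 'a \<Rightarrow> 'a \<Rightarrow> bool" where
  "reversible S add neg z mul one q01 \<alpha> \<longleftrightarrow>
     \<alpha> \<in> Lambda S z mul \<and>
     (\<exists>a\<in>Lambda S z mul.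
        q01 = ssub add neg (mul a (add (q0 add neg mul one q01 \<alpha>) \<alpha>)) \<alpha>)"

text \<open>Division by zero alpha/0 := q0*(alpha) = q0(alpha) (when Reversible).\<close>
definition div_zero ::
  "('a \<Rightarrow> 'a \<Rightarrow> 'a) \<Rightarrow> ('a \<Rightarrow> 'a) \<Rightarrow> ('a \<Rightarrow> 'a \<Rightarrow> 'a) \<Rightarrow> 'a \<Rightarrow> 'a \<Rightarrow> 'a \<Rightarrow> 'a" where
  "div_zero add neg mul one q01 \<alpha> = q0 add neg mul one q01 \<alpha>"

end

theory Submission
  imports Defs
begin

text \<open>S-associativity applied to \<open>e + 1\<close>, \<open>e\<close> and a preimage of the Unity \<open>e\<close> under
  \<open>0 \<cdot> _\<close> forces \<open>e = 1\<close>. With \<open>1\<close> a unity, S-associativity gives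
  \<open>0 \<cdot> (\<alpha> \<cdot> q\<^sub>0(1)) = \<alpha>\<close> for every scalar \<open>\<alpha>\<close>, so \<open>S\<^sub>0 \<subseteq> \<Lambda>\<close>; then
  \<open>q\<^sub>0(\<alpha>) \<in> S\<^sub>\<alpha>\<close>, and since the sets \<open>S\<^sub>\<alpha>\<close> are pairwise disjoint, \<open>\<alpha> \<mapsto> \<alpha>/0\<close> is injective.
  For reversibility the witness is \<open>\<alpha>\<^sup>* = \<alpha>\<^sup>-\<^sup>1\<close>: S-associativity yields
  \<open>\<alpha>\<^sup>-\<^sup>1 \<cdot> (\<alpha> \<cdot> q\<^sub>0(1)) = q\<^sub>0(1) - (\<alpha>\<^sup>-\<^sup>1 - 1)(\<alpha> - 1)\<close>, and expanding the
  product turns \<open>\<alpha>\<^sup>-\<^sup>1 \<cdot> (q\<^sub>0(\<alpha>) + \<alpha>) - \<alpha>\<close> into \<open>q\<^sub>0(1)\<close>.\<close>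

locale s_structure =
  fixes S :: "'a set" and add :: "'a \<Rightarrow> 'a \<Rightarrow> 'a" and neg :: "'a \<Rightarrow> 'a"
    and z :: 'a and mul :: "'a \<Rightarrow> 'a \<Rightarrow> 'a" and one :: 'a
  assumes S_structure: "S_structure S add neg z mul one"
begin

lemma add_closed [simp]: "s \<in> S \<Longrightarrow> t \<in> S \<Longrightarrow> add s t \<in> S"
  and add_assoc: "s \<in> S \<Longrightarrow> t \<in> S \<Longrightarrow> r \<in> S \<Longrightarrow> add (add s t) r = add s (add t r)"
  and add_commute: "s \<in> S \<Longrightarrow> t \<in> S \<Longrightarrow> add s t = add t s"
  and zero_closed [simp]: "z \<in> S"
  and zero_add [simp]: "s \<in> S \<Longrightarrow> add z s = s"
  and neg_closed [simp]: "s \<in> S \<Longrightarrow> neg s \<in> S"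
  and right_neg [simp]: "s \<in> S \<Longrightarrow> add s (neg s) = z"
  and mul_closed [simp]: "s \<in> S \<Longrightarrow> t \<in> S \<Longrightarrow> mul s t \<in> S"
  and one_closed [simp]: "one \<in> S"
  using S_structure unfolding S_structure_def by auto

lemma add_zero [simp]: "s \<in> S \<Longrightarrow> add s z = s"
  by (metis add_commute zero_add zero_closed)

lemma left_neg [simp]: "s \<in> S \<Longrightarrow> add (neg s) s = z"
  by (metis add_commute right_neg neg_closed)

lemma add_left_commute: "a \<in> S \<Longrightarrow> b \<in> S \<Longrightarrow> c \<in> S \<Longrightarrow> add a (add b c) = add b (add a c)"
  by (metis add_assoc add_commute)

lemma add_neg_cancel_left [simp]: "a \<in> S \<Longrightarrow> b \<in> S \<Longrightarrow> add a (add (neg a) b) = b"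
  by (metis add_assoc neg_closed right_neg zero_add)

lemma neg_add_cancel_left [simp]: "a \<in> S \<Longrightarrow> b \<in> S \<Longrightarrow> add (neg a) (add a b) = b"
  by (metis add_assoc neg_closed left_neg zero_add)

lemma add_neg_cancel_right [simp]: "a \<in> S \<Longrightarrow> b \<in> S \<Longrightarrow> add (add b a) (neg a) = b"
  by (metis add_assoc neg_closed right_neg add_zero)

lemma neg_unique: "a \<in> S \<Longrightarrow> b \<in> S \<Longrightarrow> add a b = z \<Longrightarrow> neg a = b"
  by (metis neg_add_cancel_left add_zero neg_closed)

lemma neg_neg [simp]: "a \<in> S \<Longrightarrow> neg (neg a) = a"
  by (metis neg_unique neg_closed left_neg)

lemma neg_zero [simp]: "neg z = z"
  by (simp add: neg_unique)

lemma neg_add_distrib: "a \<in> S \<Longrightarrow> b \<in> S \<Longrightarrow> neg (add a b) = add (neg a) (neg b)"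
  by (rule neg_unique) (simp_all add: add_assoc add_left_commute[of b])

lemma add_left_cancel: "a \<in> S \<Longrightarrow> b \<in> S \<Longrightarrow> c \<in> S \<Longrightarrow> add a b = add a c \<Longrightarrow> b = c"
  by (metis neg_add_cancel_left)

end

locale essential_s_structure =
  fixes S :: "'a set" and add :: "'a \<Rightarrow> 'a \<Rightarrow> 'a" and neg :: "'a \<Rightarrow> 'a"
    and z :: 'a and mul :: "'a \<Rightarrow> 'a \<Rightarrow> 'a" and one q01 :: 'a
  assumes essential: "essential S add neg z mul one q01"

sublocale essential_s_structure \<subseteq> s_structure
  using essential unfolding essential_def by unfold_locales auto

context essential_s_structure
begin

abbreviation S0 :: "'a set" where
  "S0 \<equiv> S_alpha S z mul z"

lemma mul_commute: "s \<in> S \<Longrightarrow> t \<in> S \<Longrightarrow> mul s t = mul t s"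
  using essential unfolding essential_def S_commutative_def by auto

lemma wheel_distrib:
  "s \<in> S \<Longrightarrow> t \<in> S \<Longrightarrow> r \<in> S \<Longrightarrow> add (mul s (add t r)) (mul s z) = add (mul s t) (mul s r)"
  using essential unfolding essential_def wheel_distributive_def by auto

lemma S_assoc:
  "m \<in> S0 \<Longrightarrow> n \<in> S0 \<Longrightarrow> s \<in> S \<Longrightarrow>
   mul m (mul n s) = add (mul (mul m n) s) (neg (mul (mul (add m (neg one)) (add n (neg one))) (mul z s)))"
  using essential unfolding essential_def S_associative_def ssub_def by auto

lemma zero_in_S0: "z \<in> S0"
  and one_in_S0: "one \<in> S0"
  using essential unfolding essential_def by auto

lemma q01_in_S_alpha_one: "q01 \<in> S_alpha S z mul one"
  and q0_in_S_alpha: "\<alpha> \<in> Lambda S z mul \<Longrightarrow> q0 add neg mul one q01 \<alpha> \<in> S_alpha S z mul \<alpha>"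
  using essential unfolding essential_def standard_bases_def by auto

lemma mem_S0_iff: "m \<in> S0 \<longleftrightarrow> m \<in> S \<and> mul z m = z"
  unfolding S_alpha_def using mul_commute by fastforce

lemma S0_subset: "m \<in> S0 \<Longrightarrow> m \<in> S"
  by (simp add: mem_S0_iff)

lemma S0_distrib: "m \<in> S0 \<Longrightarrow> t \<in> S \<Longrightarrow> r \<in> S \<Longrightarrow> mul m (add t r) = add (mul m t) (mul m r)"
  using wheel_distrib[of m t r] by (simp add: S_alpha_def)

lemma S0_mul_neg: "m \<in> S0 \<Longrightarrow> t \<in> S \<Longrightarrow> mul m (neg t) = neg (mul m t)"
proof -
  assume m: "m \<in> S0" and t: "t \<in> S"
  have "add (mul m t) (mul m (neg t)) = z"
    using S0_distrib[OF m t, of "neg t"] m t by (simp add: S_alpha_def)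
  then show ?thesis
    using m t by (metis S0_subset mul_closed neg_closed neg_unique)
qed

lemma S0_add_closed: "a \<in> S0 \<Longrightarrow> b \<in> S0 \<Longrightarrow> add a b \<in> S0"
  using S0_distrib[OF zero_in_S0] by (simp add: mem_S0_iff)

lemma S0_neg_closed: "a \<in> S0 \<Longrightarrow> neg a \<in> S0"
  using S0_mul_neg[OF zero_in_S0] by (simp add: mem_S0_iff)

lemma q0_inj_on_Lambda: "inj_on (q0 add neg mul one q01) (Lambda S z mul)"
  by (rule inj_onI) (metis (mono_tags) S_alpha_def mem_Collect_eq q0_in_S_alpha)

lemma unity_eq_one:
  assumes "is_unity S z mul e"
  shows "e = one"
proof -
  from assms obtain t where t: "t \<in> S" "mul z t = e" and e: "e \<in> S"
    and unity: "\<And>s. s \<in> S \<Longrightarrow> mul e s = s \<and> mul s e = s"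
    unfolding is_unity_def Lambda_def S_alpha_def by auto
  have e0: "e \<in> S0"
    using unity[of z] e by (simp add: mem_S0_iff)
  define m where "m = add e one"
  have m0: "m \<in> S0" and m_minus_one: "add m (neg one) = e"
    unfolding m_def using S0_add_closed[OF e0 one_in_S0] e by auto
  \<comment> \<open>in S-associativity for \<open>m, e, t\<close> the correction term is \<open>e (e - 1) (0 t) = e - 1\<close>\<close>
  have "add (mul m t) z = add (mul m t) (neg (add e (neg one)))"
    using S_assoc[OF m0 e0 t(1)] unity m_minus_one t e S0_subset[OF m0] by simp
  then have "neg (add e (neg one)) = z"
    using add_left_cancel[of "mul m t" z "neg (add e (neg one))"] t e S0_subset[OF m0] by simp
  then have "add e (neg one) = z"
    using neg_neg[of "add e (neg one)"] e by simp
  moreover have "add (add e (neg one)) one = e"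
    using add_assoc[of e "neg one" one] e by simp
  ultimately show ?thesis
    by simp
qed

end

locale s_ring =
  fixes S :: "'a set" and add :: "'a \<Rightarrow> 'a \<Rightarrow> 'a" and neg :: "'a \<Rightarrow> 'a"
    and z :: 'a and mul :: "'a \<Rightarrow> 'a \<Rightarrow> 'a" and one q01 :: 'a
  assumes S_ring: "S_ring S add neg z mul one q01"

sublocale s_ring \<subseteq> essential_s_structure
  using S_ring unfolding S_ring_def by unfold_locales auto

context s_ring
begin

lemma one_is_unity: "is_unity S z mul one"
  using S_ring unity_eq_one unfolding S_ring_def by auto

lemma mul_one_left [simp]: "s \<in> S \<Longrightarrow> mul one s = s"
  and mul_one_right [simp]: "s \<in> S \<Longrightarrow> mul s one = s"
  using one_is_unity unfolding is_unity_def by auto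

lemma neg_one_mul: "m \<in> S0 \<Longrightarrow> mul (neg one) m = neg m"
  using S0_mul_neg[of m one] S0_subset[of m] mul_commute[of "neg one" m] by simp

lemma zero_mul_mul_q01: "a \<in> S0 \<Longrightarrow> mul z (mul a q01) = a"
proof -
  assume a0: "a \<in> S0"
  have a: "a \<in> S" and q01: "q01 \<in> S" "mul z q01 = one"
    using a0 q01_in_S_alpha_one by (auto simp: mem_S0_iff S_alpha_def)
  have a_minus_one: "add a (neg one) \<in> S0"
    using a0 one_in_S0 by (simp add: S0_add_closed S0_neg_closed)
  have "mul z (mul a q01) = add one (neg (mul (neg one) (add a (neg one))))"
    using S_assoc[OF zero_in_S0 a0 q01(1)] a0 a_minus_one q01 by (simp add: mem_S0_iff)
  also have "\<dots> = a"
    using a by (simp add: neg_one_mul[OF a_minus_one] add_left_commute)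
  finally show ?thesis .
qed

lemma S0_subset_Lambda: "S0 \<subseteq> Lambda S z mul"
proof
  fix a assume a0: "a \<in> S0"
  then have "mul a q01 \<in> S_alpha S z mul a"
    using zero_mul_mul_q01[OF a0] q01_in_S_alpha_one mul_commute
    by (simp add: S_alpha_def mem_S0_iff)
  then show "a \<in> Lambda S z mul"
    using a0 by (auto simp: Lambda_def mem_S0_iff)
qed

lemma reversible_if_invertible:
  assumes a0: "a \<in> S0" and b0: "b \<in> S0" and ba: "mul b a = one"
  shows "reversible S add neg z mul one q01 a"
proof -
  have a: "a \<in> S" and b: "b \<in> S" and q01: "q01 \<in> S" "mul z q01 = one"
    using a0 b0 q01_in_S_alpha_one by (auto simp: mem_S0_iff S_alpha_def)
  have b_minus_one: "add b (neg one) \<in> S0"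
    using b0 one_in_S0 by (simp add: S0_add_closed S0_neg_closed)
  have "mul (add b (neg one)) (add a (neg one))
      = add (mul (add b (neg one)) a) (mul (add b (neg one)) (neg one))"
    using S0_distrib[OF b_minus_one a] by simp
  also have "\<dots> = add (add one (neg a)) (add (neg b) one)"
    using mul_commute[of _ a] S0_distrib[OF a0 b] S0_mul_neg[OF a0] S0_mul_neg[OF b_minus_one]
      ba a b by (simp add: neg_add_distrib)
  finally have "mul b (mul a q01) = add q01 (neg (add (add one (neg a)) (add (neg b) one)))"
    using S_assoc[OF b0 a0 q01(1)] ba q01 a b by simp
  moreover have "q0 add neg mul one q01 a = add (add (mul a q01) a) (neg one)"
    using S0_distrib[OF a0 q01(1)] a unfolding q0_def ssub_def by simp
  ultimately have "mul b (add (q0 add neg mul one q01 a) a)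
      = add (add (add (add q01 (neg (add (add one (neg a)) (add (neg b) one)))) one) (neg b)) one"
    using S0_distrib[OF b0] S0_mul_neg[OF b0] ba a b q01 by simp
  also have "\<dots> = add q01 a"
    using a b q01
    by (simp add: neg_add_distrib add_assoc add_commute add_left_commute)
      (smt (verit) add_closed add_commute add_left_commute add_neg_cancel_left neg_closed one_closed)
  finally have "q01 = ssub add neg (mul b (add (q0 add neg mul one q01 a) a)) a"
    using a q01 by (simp add: ssub_def)
  then show ?thesis
    unfolding reversible_def using S0_subset_Lambda a0 b0 by blast
qed

end

locale s_field =
  fixes S :: "'a set" and add :: "'a \<Rightarrow> 'a \<Rightarrow> 'a" and neg :: "'a \<Rightarrow> 'a"
    and z :: 'a and mul :: "'a \<Rightarrow> 'a \<Rightarrow> 'a" and one q01 :: 'a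
  assumes S_field: "S_field S add neg z mul one q01"

sublocale s_field \<subseteq> s_ring
  using S_field unfolding S_field_def by unfold_locales auto

lemma (in s_field) S0_inverse: "a \<in> S0 \<Longrightarrow> a \<noteq> z \<Longrightarrow> \<exists>b\<in>S0. mul b a = one"
  using S_field unity_eq_one unfolding S_field_def by blast

theorem theorem4p2p3:
  fixes S :: "'a set" and add mul :: "'a \<Rightarrow> 'a \<Rightarrow> 'a" and neg :: "'a \<Rightarrow> 'a"
    and z one q01 :: 'a
  assumes "S_field S add neg z mul one q01"
  shows "(\<forall>\<alpha>\<in>S_alpha S z mul z. \<alpha> \<noteq> z \<longrightarrow>
            reversible S add neg z mul one q01 \<alpha> \<and>
            (\<exists>!x. x = div_zero add neg mul one q01 \<alpha>))
       \<and> (\<forall>\<alpha>\<in>S_alpha S z mul z. \<forall>\<beta>\<in>S_alpha S z mul z.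
            \<alpha> \<noteq> z \<longrightarrow> \<beta> \<noteq> z \<longrightarrow> \<alpha> \<noteq> \<beta> \<longrightarrow>
            div_zero add neg mul one q01 \<alpha> \<noteq> div_zero add neg mul one q01 \<beta>)"
proof -
  interpret s_field S add neg z mul one q01
    by (rule s_field.intro) (fact assms)
  show ?thesis
  proof (intro conjI ballI impI)
    fix \<alpha> assume \<alpha>: "\<alpha> \<in> S_alpha S z mul z" "\<alpha> \<noteq> z"
    then obtain \<beta> where "\<beta> \<in> S_alpha S z mul z" "mul \<beta> \<alpha> = one"
      using S0_inverse by blast
    with \<alpha>(1) show "reversible S add neg z mul one q01 \<alpha>"
      by (rule reversible_if_invertible)
    show "\<exists>!x. x = div_zero add neg mul one q01 \<alpha>"
      by simp
  next
    fix \<alpha> \<beta> assume "\<alpha> \<in> S_alpha S z mul z" "\<beta> \<in> S_alpha S z mul z" "\<alpha> \<noteq> \<beta>"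
    then show "div_zero add neg mul one q01 \<alpha> \<noteq> div_zero add neg mul one q01 \<beta>"
      using inj_onD[OF q0_inj_on_Lambda] S0_subset_Lambda unfolding div_zero_def by blast
  qed
qed

end
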